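(* Let $d\ge4$ and $1\le p<d/2$ be integers. If $\mathbf{a}=(a,(a_{j00},a_{j01},a_{j10},a_{j11})_{j\in[p]})$ is a point on the boundary of $K$ with $a\notin\{0,\tfrac12\}$, then $\mathbf{a}$ is not a local maximum of $\varphi$ on $K$.
   Context: Let $\tau_j=\binom{d}{p}\binom{p}{j}\binom{d-p}{p-j}$ for $0\le j\le p$. Points of $\mathbb{R}^{4p+1}$ are written $\mathbf{z}=(z,(z_{j00},z_{j01},z_{j10},z_{j11})_{j\in[p]})$, with $z_{0\alpha\alpha}=z-\sum_{j\in[p]}z_{j\alpha\alpha}$ ($\alpha\in\{0,1\}$) and $z_{0\alpha\beta}=\frac12-z-\sum_{j\in[p]}z_{j\alpha\beta}$ ($\alpha\ne\beta$). $K$ is the set of $\mathbf{z}$ with $0\le z\le\frac12$ and $z_{j\alpha\beta}\ge0$ for all $0\le j\le p$, $\alpha,\beta\in\{0,1\}$. $A(\mathbf{z})=p+(d-4p)z+\sum_{j\in[p]}j(z_{j00}+z_{j11}-z_{j01}-z_{j10})$, $B=\frac d2-A$, and $\varphi(\mathbf{z})=A\log A+B\log B+\sum_{0\le j\le p,\ \alpha,\beta\in\{0,1\}}(z_{j\alpha\beta}\log\tau_j-z_{j\alpha\beta}\log z_{j\alpha\beta})$, with $0\log0=0$, a continuous function on $K$. *)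

theory Defs
  imports "HOL-Analysis.Analysis"
begin

text \<open>A point of R^(4p+1) is a pair (z, w) where z is the first coordinate and
  w j a b stands for z_{j a b}, for j in {1..p} and a, b in {0,1}.
  All other values of w are required to be 0 (so the carrier is a copy of R^(4p+1)).\<close>

type_synonym pt = "real \<times> (nat \<Rightarrow> nat \<Rightarrow> nat \<Rightarrow> real)"

definition Pspace :: "nat \<Rightarrow> pt set" where
  "Pspace p = {(z, w). \<forall>j a b. (j \<notin> {1..p} \<or> a > 1 \<or> b > 1) \<longrightarrow> w j a b = 0}"

definition pdist :: "nat \<Rightarrow> pt \<Rightarrow> pt \<Rightarrow> real" where
  "pdist p x y = sqrt ((fst x - fst y)\<^sup>2 +
     (\<Sum>j\<in>{1..p}. \<Sum>a<2. \<Sum>b<2. (snd x j a b - snd y j a b)\<^sup>2))"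

definition tau :: "nat \<Rightarrow> nat \<Rightarrow> nat \<Rightarrow> real" where
  "tau d p j = real ((d choose p) * (p choose j) * ((d - p) choose (p - j)))"

text \<open>Extended coordinates: index 0 is the dependent coordinate z_{0ab}.\<close>
definition zc :: "nat \<Rightarrow> pt \<Rightarrow> nat \<Rightarrow> nat \<Rightarrow> nat \<Rightarrow> real" where
  "zc p x j a b = (if j = 0 then
       (if a = b then fst x - (\<Sum>i\<in>{1..p}. snd x i a a)
        else 1/2 - fst x - (\<Sum>i\<in>{1..p}. snd x i a b))
     else snd x j a b)"

definition Kset :: "nat \<Rightarrow> pt set" where
  "Kset p = {x \<in> Pspace p. 0 \<le> fst x \<and> fst x \<le> 1/2 \<and>
       (\<forall>j\<in>{0..p}. \<forall>a<2. \<forall>b<2. 0 \<le> zc p x j a b)}"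

definition Afun :: "nat \<Rightarrow> nat \<Rightarrow> pt \<Rightarrow> real" where
  "Afun d p x = real p + (real d - 4 * real p) * fst x +
     (\<Sum>j\<in>{1..p}. real j * (snd x j 0 0 + snd x j 1 1 - snd x j 0 1 - snd x j 1 0))"

definition Bfun :: "nat \<Rightarrow> nat \<Rightarrow> pt \<Rightarrow> real" where
  "Bfun d p x = real d / 2 - Afun d p x"

definition xlogx :: "real \<Rightarrow> real" where
  "xlogx t = (if t = 0 then 0 else t * ln t)"

definition phi :: "nat \<Rightarrow> nat \<Rightarrow> pt \<Rightarrow> real" where
  "phi d p x = xlogx (Afun d p x) + xlogx (Bfun d p x) +
     (\<Sum>j\<in>{0..p}. \<Sum>a<2. \<Sum>b<2. zc p x j a b * ln (tau d p j) - xlogx (zc p x j a b))"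

text \<open>Topological boundary of K inside R^(4p+1) (K is closed, so boundary points lie in K).\<close>
definition on_boundary :: "nat \<Rightarrow> pt \<Rightarrow> bool" where
  "on_boundary p x \<longleftrightarrow> x \<in> Kset p \<and>
     (\<forall>e>0. \<exists>y\<in>Pspace p. pdist p y x < e \<and> y \<notin> Kset p)"

definition is_local_max_on_K :: "nat \<Rightarrow> nat \<Rightarrow> pt \<Rightarrow> bool" where
  "is_local_max_on_K d p x \<longleftrightarrow> x \<in> Kset p \<and>
     (\<exists>e>0. \<forall>y\<in>Kset p. pdist p y x < e \<longrightarrow> phi d p y \<le> phi d p x)"

end

theory Submission
  imports Defs
begin

text \<open>A boundary point with 0 < z < 1/2 has a vanishing coordinate z_{j a0 b0}, while the
  coordinates z_{i a0 b0}, 0 \<le> i \<le> p, sum to z or to 1/2 - z, so some z_{k a0 b0} is positive.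
  Moving a small mass t from z_{k a0 b0} to z_{j a0 b0} stays in K and keeps A and B positive.
  By convexity of t log t, every term of phi then changes by at least C t for a constant C,
  except the entropy of the vanishing coordinate, which contributes -t log t; since
  -log t exceeds any constant for small t, phi strictly increases.\<close>

lemma xlogx_above_tangent:
  assumes "0 < u" "0 \<le> v"
  shows "xlogx u + (ln u + 1) * (v - u) \<le> xlogx v"
proof (cases "v = 0")
  case True
  then show ?thesis using assms by (simp add: xlogx_def algebra_simps)
next
  case False
  then have v: "0 < v" using assms by simp
  have "ln (u / v) \<le> u / v - 1" using assms v by (intro ln_le_minus_one) simp
  then have "v * ln (u / v) \<le> v * (u / v - 1)" using v by (intro mult_left_mono) auto
  then have "v * (ln u - ln v) \<le> u - v" using assms v by (simp add: ln_div algebra_simps)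
  then show ?thesis using assms v False by (simp add: xlogx_def algebra_simps)
qed

lemma exists_small_ln_less:
  assumes "0 < s"
  obtains t :: real where "0 < t" "t \<le> s" "ln t < C"
proof
  show "0 < min s (exp C / 2)" using assms by simp
  show "min s (exp C / 2) \<le> s" by simp
  have "ln (min s (exp C / 2)) \<le> ln (exp C / 2)" using assms by simp
  also have "\<dots> < C" by (simp add: ln_div)
  finally show "ln (min s (exp C / 2)) < C" .
qed

lemma scaled_difference_bounds:
  fixes u v s r :: real
  assumes "0 \<le> u" "0 \<le> v" "0 \<le> s" "s \<le> r"
  shows "- (r * v) \<le> s * (u - v)" and "s * (u - v) \<le> r * u"
proof -
  have "s * v \<le> r * v" "s * u \<le> r * u" using assms by (simp_all add: mult_right_mono)
  moreover have "0 \<le> s * u" "0 \<le> s * v" using assms by simp_all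
  ultimately show "- (r * v) \<le> s * (u - v)" "s * (u - v) \<le> r * u"
    by (simp_all add: right_diff_distrib)
qed

lemma sum_2x2_delta:
  fixes c :: "nat \<Rightarrow> nat \<Rightarrow> 'a::comm_monoid_add"
  assumes "a0 < 2" "b0 < 2"
  shows "(\<Sum>a<2. \<Sum>b<2. if a = a0 \<and> b = b0 then c a b else 0) = c a0 b0"
proof -
  have "(\<Sum>a<2. \<Sum>b<2. if a = a0 \<and> b = b0 then c a b else 0)
      = (\<Sum>a<2. if a = a0 then (\<Sum>b<2. if b = b0 then c a b else 0) else 0)"
    by (intro sum.cong) auto
  then show ?thesis using assms by (simp add: sum.delta)
qed

lemma pdist_nonneg: "0 \<le> pdist p y x"
  unfolding pdist_def by (intro real_sqrt_ge_zero add_nonneg_nonneg sum_nonneg) auto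

lemma fst_dist_le_pdist: "\<bar>fst y - fst x\<bar> \<le> pdist p y x"
proof -
  have "0 \<le> (\<Sum>j\<in>{1..p}. \<Sum>a<2. \<Sum>b<2. (snd y j a b - snd x j a b)\<^sup>2)"
    by (intro sum_nonneg) auto
  then show ?thesis unfolding pdist_def by (intro real_le_rsqrt) simp
qed

lemma snd_dist_le_pdist:
  assumes "i \<in> {1..p}" "a < 2" "b < 2"
  shows "\<bar>snd y i a b - snd x i a b\<bar> \<le> pdist p y x"
proof -
  let ?T = "\<lambda>j a b. (snd y j a b - snd x j a b)\<^sup>2"
  have "?T i a b \<le> (\<Sum>b'<2. ?T i a b')"
    using assms by (intro member_le_sum) auto
  also have "\<dots> \<le> (\<Sum>a'<2. \<Sum>b'<2. ?T i a' b')"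
    using assms by (intro member_le_sum sum_nonneg) auto
  also have "\<dots> \<le> (\<Sum>j\<in>{1..p}. \<Sum>a'<2. \<Sum>b'<2. ?T j a' b')"
    using assms by (intro member_le_sum sum_nonneg) auto
  finally show ?thesis unfolding pdist_def by (intro real_le_rsqrt add_increasing) auto
qed

lemma zc_dist_le_pdist:
  assumes "j \<in> {0..p}" "a < 2" "b < 2"
  shows "\<bar>zc p y j a b - zc p x j a b\<bar> \<le> (real p + 1) * pdist p y x"
proof (cases "j = 0")
  case True
  let ?d = "(\<Sum>i\<in>{1..p}. snd y i a b) - (\<Sum>i\<in>{1..p}. snd x i a b)"
  have "\<bar>?d\<bar> \<le> (\<Sum>i\<in>{1..p}. \<bar>snd y i a b - snd x i a b\<bar>)"
    unfolding sum_subtractf[symmetric] by (rule sum_abs)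
  also have "\<dots> \<le> (\<Sum>i\<in>{1..p}. pdist p y x)"
    using assms by (intro sum_mono snd_dist_le_pdist) auto
  finally have d: "\<bar>?d\<bar> \<le> real p * pdist p y x"
    by simp
  have "zc p y j a b - zc p x j a b = (if a = b then 1 else -1) * (fst y - fst x) - ?d"
    using True by (simp add: zc_def)
  then have "\<bar>zc p y j a b - zc p x j a b\<bar> \<le> \<bar>fst y - fst x\<bar> + \<bar>?d\<bar>"
    by (cases "a = b") (auto simp: abs_le_iff)
  with d fst_dist_le_pdist[of y x p] show ?thesis
    by (simp add: algebra_simps)
next
  case False
  then have "\<bar>zc p y j a b - zc p x j a b\<bar> \<le> pdist p y x"
    using assms by (simp add: zc_def snd_dist_le_pdist)
  with pdist_nonneg[of p y x] show ?thesis
    by (simp add: algebra_simps add_increasing2)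
qed

lemma Kset_snd_nonneg:
  assumes "x \<in> Kset p" "i \<in> {1..p}" "a < 2" "b < 2"
  shows "0 \<le> snd x i a b"
proof -
  have "0 \<le> zc p x i a b" using assms unfolding Kset_def by auto
  then show ?thesis using assms(2) by (simp add: zc_def)
qed

lemma Kset_sum_snd_le:
  assumes "x \<in> Kset p" "a < 2" "b < 2"
  shows "(\<Sum>i\<in>{1..p}. snd x i a b) \<le> (if a = b then fst x else 1/2 - fst x)"
proof -
  have "0 \<le> zc p x 0 a b" using assms unfolding Kset_def by auto
  then show ?thesis by (auto simp: zc_def split: if_splits)
qed

lemma sum_zc_group:
  "(\<Sum>i\<in>{0..p}. zc p x i a b) = (if a = b then fst x else 1/2 - fst x)"
proof -
  have "(\<Sum>i\<in>{0..p}. zc p x i a b) = zc p x 0 a b + (\<Sum>i\<in>{Suc 0..p}. zc p x i a b)"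
    by (rule sum.atLeast_Suc_atMost) simp
  also have "(\<Sum>i\<in>{Suc 0..p}. zc p x i a b) = (\<Sum>i\<in>{1..p}. snd x i a b)"
    by (intro sum.cong) (auto simp: zc_def)
  finally show ?thesis by (simp add: zc_def)
qed

lemma exists_pos_zc:
  assumes "0 < fst x" "fst x < 1/2"
  obtains k where "k \<in> {0..p}" "0 < zc p x k a b"
proof -
  have "0 < (\<Sum>i\<in>{0..p}. zc p x i a b)" using sum_zc_group assms by simp
  with that show thesis by (meson not_le sum_nonpos)
qed

lemma Kset_contains_pdist_ball:
  assumes xK: "x \<in> Kset p" and "0 < fst x" "fst x < 1/2"
    and pos: "\<And>j a b. j \<in> {0..p} \<Longrightarrow> a < 2 \<Longrightarrow> b < 2 \<Longrightarrow> 0 < zc p x j a b"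
  obtains r where "0 < r" "\<And>y. y \<in> Pspace p \<Longrightarrow> pdist p y x < r \<Longrightarrow> y \<in> Kset p"
proof
  define R where "R = insert (fst x) (insert (1/2 - fst x)
    ((\<lambda>(j, a, b). zc p x j a b / (real p + 1)) ` ({0..p} \<times> {..<2} \<times> {..<2})))"
  have R: "finite R" "R \<noteq> {}" by (auto simp: R_def)
  show "0 < Min R"
    using assms by (auto simp: Min_gr_iff[OF R] R_def)
  fix y assume yP: "y \<in> Pspace p" and "pdist p y x < Min R"
  then have close: "pdist p y x < s" if "s \<in> R" for s
    using Min_le[OF R(1) that] by linarith
  have "0 \<le> fst y" "fst y \<le> 1/2"
    using close[of "fst x"] close[of "1/2 - fst x"] fst_dist_le_pdist[of y x p]
    by (auto simp: R_def)
  moreover have "0 \<le> zc p y j a b" if "j \<in> {0..p}" "a < 2" "b < 2" for j a b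
  proof -
    have "pdist p y x < zc p x j a b / (real p + 1)"
      using that by (intro close) (auto simp: R_def intro!: rev_image_eqI[of "(j, a, b)"])
    then have "(real p + 1) * pdist p y x < zc p x j a b"
      by (simp add: field_simps)
    then show ?thesis using zc_dist_le_pdist[OF that, of y x] by linarith
  qed
  ultimately show "y \<in> Kset p" using yP by (simp add: Kset_def)
qed

lemma on_boundary_zc_eq_0:
  assumes bd: "on_boundary p x" and "0 < fst x" "fst x < 1/2"
  obtains j a b where "j \<in> {0..p}" "a < 2" "b < 2" "zc p x j a b = 0"
proof (cases "\<exists>j\<in>{0..p}. \<exists>a<2. \<exists>b<2. zc p x j a b = 0")
  case False
  have xK: "x \<in> Kset p" using bd by (simp add: on_boundary_def)
  have pos: "0 < zc p x j a b" if "j \<in> {0..p}" "a < 2" "b < 2" for j a b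
  proof -
    have "0 \<le> zc p x j a b" using xK that unfolding Kset_def by blast
    moreover have "zc p x j a b \<noteq> 0" using False that by blast
    ultimately show ?thesis by simp
  qed
  obtain r where "0 < r"
    and near: "\<And>y. y \<in> Pspace p \<Longrightarrow> pdist p y x < r \<Longrightarrow> y \<in> Kset p"
    using Kset_contains_pdist_ball[OF xK assms(2,3) pos] by blast
  with bd obtain y where "y \<in> Pspace p" "pdist p y x < r" "y \<notin> Kset p"
    unfolding on_boundary_def by blast
  with near show ?thesis by blast
qed (use that in blast)

lemma Afun_bounds:
  assumes xK: "x \<in> Kset p"
  shows "(real d - 2 * real p) * fst x \<le> Afun d p x"
    and "Afun d p x \<le> real p + (real d - 2 * real p) * fst x"
proof -
  let ?u = "\<lambda>j. snd x j 0 0 + snd x j 1 1" and ?v = "\<lambda>j. snd x j 0 1 + snd x j 1 0"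
  let ?T = "\<Sum>j\<in>{1..p}. real j * (?u j - ?v j)"
  have Afun_eq: "Afun d p x = real p + (real d - 4 * real p) * fst x + ?T"
    by (simp only: Afun_def diff_diff_eq)
  have uv: "0 \<le> ?u j" "0 \<le> ?v j" if "j \<in> {1..p}" for j
    using Kset_snd_nonneg[OF xK that] by simp_all
  have "(\<Sum>j\<in>{1..p}. ?u j) \<le> 2 * fst x" "(\<Sum>j\<in>{1..p}. ?v j) \<le> 1 - 2 * fst x"
    using Kset_sum_snd_le[OF xK, of 0 0] Kset_sum_snd_le[OF xK, of 1 1]
      Kset_sum_snd_le[OF xK, of 0 1] Kset_sum_snd_le[OF xK, of 1 0]
    by (simp_all add: sum.distrib)
  then have sums: "real p * (\<Sum>j\<in>{1..p}. ?u j) \<le> real p * (2 * fst x)"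
    "real p * (\<Sum>j\<in>{1..p}. ?v j) \<le> real p * (1 - 2 * fst x)"
    by (simp_all add: mult_left_mono)
  have "- (real p * (\<Sum>j\<in>{1..p}. ?v j)) = (\<Sum>j\<in>{1..p}. - (real p * ?v j))"
    by (simp add: sum_distrib_left sum_negf)
  also have "\<dots> \<le> ?T"
    using uv by (intro sum_mono scaled_difference_bounds(1)) auto
  finally have lower: "- (real p * (\<Sum>j\<in>{1..p}. ?v j)) \<le> ?T" .
  have "?T \<le> (\<Sum>j\<in>{1..p}. real p * ?u j)"
    using uv by (intro sum_mono scaled_difference_bounds(2)) auto
  also have "\<dots> = real p * (\<Sum>j\<in>{1..p}. ?u j)"
    by (simp add: sum_distrib_left)
  finally have upper: "?T \<le> real p * (\<Sum>j\<in>{1..p}. ?u j)" .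
  show "(real d - 2 * real p) * fst x \<le> Afun d p x"
    "Afun d p x \<le> real p + (real d - 2 * real p) * fst x"
    using Afun_eq lower upper sums by (simp_all add: algebra_simps)
qed

lemma Afun_Bfun_pos:
  assumes "x \<in> Kset p" "0 < fst x" "fst x < 1/2" "2 * p < d"
  shows "0 < Afun d p x" and "0 < Bfun d p x"
proof -
  have "0 < real d - 2 * real p" using assms(4) by linarith
  then have "0 < (real d - 2 * real p) * fst x" "0 < (real d - 2 * real p) * (1/2 - fst x)"
    using assms(2,3) by simp_all
  then show "0 < Afun d p x" "0 < Bfun d p x"
    using Afun_bounds[OF assms(1), of d] unfolding Bfun_def by (simp_all add: algebra_simps)
qed

text \<open>Moves mass t from z_{k a0 b0} to z_{j a0 b0}; the dependent coordinate z_{0 a0 b0}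
  absorbs the change when j or k is 0.\<close>

definition move_mass :: "nat \<Rightarrow> nat \<Rightarrow> nat \<Rightarrow> nat \<Rightarrow> real \<Rightarrow> pt \<Rightarrow> pt" where
  "move_mass a0 b0 k j t x = (fst x, \<lambda>i a b. snd x i a b +
     (if i \<noteq> 0 \<and> a = a0 \<and> b = b0 then (if i = j then t else 0) - (if i = k then t else 0) else 0))"

lemma fst_move_mass [simp]: "fst (move_mass a0 b0 k j t x) = fst x"
  by (simp add: move_mass_def)

lemma move_mass_in_Pspace:
  assumes "x \<in> Pspace p" "j \<in> {0..p}" "k \<in> {0..p}" "a0 < 2" "b0 < 2"
  shows "move_mass a0 b0 k j t x \<in> Pspace p"
  using assms unfolding Pspace_def move_mass_def by auto

lemma zc_move_mass:
  assumes "j \<in> {0..p}" "k \<in> {0..p}" "i \<in> {0..p}"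
  shows "zc p (move_mass a0 b0 k j t x) i a b = zc p x i a b +
     (if a = a0 \<and> b = b0 then (if i = j then t else 0) - (if i = k then t else 0) else 0)"
proof (cases "i = 0")
  case True
  let ?\<delta> = "(if a = a0 \<and> b = b0 then (if i = j then t else 0) - (if i = k then t else 0) else 0)"
  have sum_snd: "(\<Sum>i\<in>{1..p}. snd (move_mass a0 b0 k j t x) i a b) = (\<Sum>i\<in>{1..p}. snd x i a b) - ?\<delta>"
  proof (cases "a = a0 \<and> b = b0")
    case True
    then show ?thesis
      using assms \<open>i = 0\<close> by (simp add: move_mass_def sum.distrib sum_subtractf sum.delta)
  next
    case False
    then have "snd (move_mass a0 b0 k j t x) i a b = snd x i a b" for i
      by (auto simp: move_mass_def)
    with False show ?thesis by auto
  qed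
  have "zc p (move_mass a0 b0 k j t x) i a b
      = (if a = b then fst x else 1/2 - fst x) - (\<Sum>i\<in>{1..p}. snd (move_mass a0 b0 k j t x) i a b)"
    using True by (simp add: zc_def)
  also have "\<dots> = zc p x i a b + ?\<delta>"
    unfolding sum_snd using True by (simp add: zc_def)
  finally show ?thesis .
qed (simp add: zc_def move_mass_def)

lemma move_mass_in_Kset:
  assumes xK: "x \<in> Kset p" and "j \<in> {0..p}" "k \<in> {0..p}" "a0 < 2" "b0 < 2"
    and "0 \<le> t" "t \<le> zc p x k a0 b0"
  shows "move_mass a0 b0 k j t x \<in> Kset p"
proof -
  have "0 \<le> zc p (move_mass a0 b0 k j t x) i a b" if "i \<in> {0..p}" "a < 2" "b < 2" for i a b
  proof -
    have "0 \<le> zc p x i a b" using xK that unfolding Kset_def by blast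
    then show ?thesis using zc_move_mass[OF assms(2,3) that(1)] assms(6,7) by auto
  qed
  moreover have "move_mass a0 b0 k j t x \<in> Pspace p"
    using xK assms(2-5) by (intro move_mass_in_Pspace) (auto simp: Kset_def)
  ultimately show ?thesis using xK by (simp add: Kset_def)
qed

lemma Afun_move_mass:
  assumes "j \<in> {0..p}" "k \<in> {0..p}" "a0 < 2" "b0 < 2"
  shows "Afun d p (move_mass a0 b0 k j t x)
    = Afun d p x + (if a0 = b0 then 1 else -1) * (real j - real k) * t"
proof -
  let ?\<delta> = "\<lambda>i. (if i = j then t else 0) - (if i = k then t else 0)"
  let ?w = "snd (move_mass a0 b0 k j t x)"
  have combo: "?w i 0 0 + ?w i 1 1 - ?w i 0 1 - ?w i 1 0
      = snd x i 0 0 + snd x i 1 1 - snd x i 0 1 - snd x i 1 0 + (if a0 = b0 then 1 else -1) * ?\<delta> i"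
    if "i \<in> {1..p}" for i
    using that less_2_cases[OF assms(3)] less_2_cases[OF assms(4)] by (auto simp: move_mass_def)
  have "(\<Sum>i\<in>{1..p}. real i * (?w i 0 0 + ?w i 1 1 - ?w i 0 1 - ?w i 1 0))
      = (\<Sum>i\<in>{1..p}. real i * (snd x i 0 0 + snd x i 1 1 - snd x i 0 1 - snd x i 1 0)
          + (if a0 = b0 then 1 else -1) * (real i * ?\<delta> i))"
    by (intro sum.cong refl, unfold combo) (simp_all add: algebra_simps)
  also have "\<dots> = (\<Sum>i\<in>{1..p}. real i * (snd x i 0 0 + snd x i 1 1 - snd x i 0 1 - snd x i 1 0))
      + (if a0 = b0 then 1 else -1) * (\<Sum>i\<in>{1..p}. real i * ?\<delta> i)"
    by (simp only: sum.distrib sum_distrib_left)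
  finally have sum_w: "(\<Sum>i\<in>{1..p}. real i * (?w i 0 0 + ?w i 1 1 - ?w i 0 1 - ?w i 1 0))
      = (\<Sum>i\<in>{1..p}. real i * (snd x i 0 0 + snd x i 1 1 - snd x i 0 1 - snd x i 1 0))
      + (if a0 = b0 then 1 else -1) * (\<Sum>i\<in>{1..p}. real i * ?\<delta> i)" .
  have "(\<Sum>i\<in>{1..p}. real i * ?\<delta> i)
      = (\<Sum>i\<in>{1..p}. if i = j then real j * t else 0) - (\<Sum>i\<in>{1..p}. if i = k then real k * t else 0)"
    unfolding sum_subtractf[symmetric] by (intro sum.cong) auto
  also have "\<dots> = (real j - real k) * t"
    using assms(1,2) by (cases "j = 0"; cases "k = 0") (simp_all add: sum.delta algebra_simps)
  finally show ?thesis using sum_w unfolding Afun_def by (simp add: algebra_simps)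
qed

lemma pdist_move_mass_le:
  assumes "0 \<le> t" "a0 < 2" "b0 < 2"
  shows "pdist p (move_mass a0 b0 k j t x) x \<le> 2 * t"
proof -
  let ?\<delta> = "\<lambda>i. (if i = j then t else 0) - (if i = k then t else 0)"
  have "(\<Sum>i\<in>{1..p}. \<Sum>a<2. \<Sum>b<2. (snd (move_mass a0 b0 k j t x) i a b - snd x i a b)\<^sup>2)
      = (\<Sum>i\<in>{1..p}. \<Sum>a<2. \<Sum>b<2. if a = a0 \<and> b = b0 then (?\<delta> i)\<^sup>2 else 0)"
    by (intro sum.cong refl) (simp add: move_mass_def)
  also have "\<dots> = (\<Sum>i\<in>{1..p}. (?\<delta> i)\<^sup>2)"
    using assms by (simp add: sum_2x2_delta)
  also have "\<dots> \<le> (\<Sum>i\<in>{1..p}. (if i = j then t\<^sup>2 else 0) + (if i = k then t\<^sup>2 else 0))"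
    by (intro sum_mono) auto
  also have "\<dots> \<le> (2 * t)\<^sup>2"
    by (simp add: sum.distrib sum.delta power2_eq_square)
  finally have "pdist p (move_mass a0 b0 k j t x) x \<le> sqrt ((2 * t)\<^sup>2)"
    unfolding pdist_def by (intro real_sqrt_le_mono) simp
  also have "\<dots> = 2 * t"
    using assms(1) by (simp only: real_sqrt_abs abs_of_nonneg mult_nonneg_nonneg zero_le_numeral)
  finally show ?thesis .
qed

lemma sum_zc_move_mass:
  fixes F :: "nat \<Rightarrow> real \<Rightarrow> real"
  assumes "j \<in> {0..p}" "k \<in> {0..p}" "j \<noteq> k" "a0 < 2" "b0 < 2"
  shows "(\<Sum>i\<in>{0..p}. \<Sum>a<2. \<Sum>b<2. F i (zc p (move_mass a0 b0 k j t x) i a b))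
    = (\<Sum>i\<in>{0..p}. \<Sum>a<2. \<Sum>b<2. F i (zc p x i a b))
      + (F j (zc p x j a0 b0 + t) - F j (zc p x j a0 b0))
      + (F k (zc p x k a0 b0 - t) - F k (zc p x k a0 b0))"
proof -
  let ?y = "move_mass a0 b0 k j t x"
  let ?D = "\<lambda>i a b. F i (zc p ?y i a b) - F i (zc p x i a b)"
  have "(\<Sum>i\<in>{0..p}. \<Sum>a<2. \<Sum>b<2. ?D i a b)
      = (\<Sum>i\<in>{0..p}. \<Sum>a<2. \<Sum>b<2. if a = a0 \<and> b = b0 then ?D i a b else 0)"
    using assms(1,2) by (intro sum.cong refl) (auto simp: zc_move_mass)
  also have "\<dots> = (\<Sum>i\<in>{0..p}. ?D i a0 b0)"
    using assms(4,5) by (simp add: sum_2x2_delta)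
  also have "\<dots> = (\<Sum>i\<in>{j, k}. ?D i a0 b0)"
    using assms(1,2) by (intro sum.mono_neutral_right) (auto simp: zc_move_mass)
  also have "\<dots> = (F j (zc p x j a0 b0 + t) - F j (zc p x j a0 b0))
      + (F k (zc p x k a0 b0 - t) - F k (zc p x k a0 b0))"
    using assms(1-3) by (simp add: zc_move_mass)
  finally show ?thesis by (simp add: sum_subtractf)
qed

lemma phi_move_mass_gain:
  assumes xK: "x \<in> Kset p" and z: "0 < fst x" "fst x < 1/2" and dp: "2 * p < d"
    and jk: "j \<in> {0..p}" "k \<in> {0..p}" "j \<noteq> k" and ab: "a0 < 2" "b0 < 2"
    and zj: "zc p x j a0 b0 = 0" and zk: "0 < zc p x k a0 b0"
  obtains C where "\<And>t. 0 < t \<Longrightarrow> 2 * t \<le> zc p x k a0 b0 \<Longrightarrow>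
    phi d p x + t * (C - ln t) \<le> phi d p (move_mass a0 b0 k j t x)"
proof
  define Z where "Z = zc p x k a0 b0"
  define A where "A = Afun d p x"
  define B where "B = Bfun d p x"
  define c :: real where "c = (if a0 = b0 then 1 else -1) * (real j - real k)"
  define F where "F = (\<lambda>i u. u * ln (tau d p i) - xlogx u)"
  have phi_eq: "phi d p w = xlogx (Afun d p w) + xlogx (Bfun d p w)
      + (\<Sum>i\<in>{0..p}. \<Sum>a<2. \<Sum>b<2. F i (zc p w i a b))" for w
    unfolding phi_def F_def ..
  fix t assume t: "0 < t" "2 * t \<le> zc p x k a0 b0"
  define y where "y = move_mass a0 b0 k j t x"
  have yK: "y \<in> Kset p"
    unfolding y_def using xK jk ab t by (intro move_mass_in_Kset) auto
  have Ay: "Afun d p y = A + c * t" and By: "Bfun d p y = B - c * t"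
    using Afun_move_mass[OF jk(1,2) ab] by (simp_all add: y_def A_def B_def Bfun_def c_def)
  have A: "0 < A" "0 \<le> A + c * t" and B: "0 < B" "0 \<le> B - c * t"
    using Afun_Bfun_pos[OF xK z dp] Afun_Bfun_pos[OF yK _ _ dp] z Ay By
    by (auto simp: A_def B_def y_def)
  have "(\<Sum>i\<in>{0..p}. \<Sum>a<2. \<Sum>b<2. F i (zc p y i a b))
      = (\<Sum>i\<in>{0..p}. \<Sum>a<2. \<Sum>b<2. F i (zc p x i a b))
        + (t * ln (tau d p j) - xlogx t) + (xlogx Z - xlogx (Z - t) - t * ln (tau d p k))"
    using sum_zc_move_mass[OF jk ab, of F t x] zj
    by (simp add: y_def Z_def F_def xlogx_def algebra_simps)
  then have "phi d p y - phi d p x = (xlogx (A + c * t) - xlogx A) + (xlogx (B - c * t) - xlogx B)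
      + (t * ln (tau d p j) - xlogx t) + (xlogx Z - xlogx (Z - t) - t * ln (tau d p k))"
    unfolding phi_eq[of y] phi_eq[of x] Ay By A_def B_def by simp
  moreover have "xlogx A + (ln A + 1) * (c * t) \<le> xlogx (A + c * t)"
    using xlogx_above_tangent[OF A] by simp
  moreover have "xlogx B - (ln B + 1) * (c * t) \<le> xlogx (B - c * t)"
    using xlogx_above_tangent[OF B] by simp
  moreover have "xlogx (Z - t) + (ln (Z - t) + 1) * t \<le> xlogx Z"
    using xlogx_above_tangent[of "Z - t" Z] t zk by (simp add: Z_def)
  moreover have "(ln (Z / 2) + 1) * t \<le> (ln (Z - t) + 1) * t"
    using t zk by (intro mult_right_mono) (auto simp: Z_def)
  moreover have "xlogx t = t * ln t" using t by (simp add: xlogx_def)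
  ultimately show "phi d p x + t * (c * (ln A - ln B) + ln (tau d p j) - ln (tau d p k)
      + ln (Z / 2) + 1 - ln t) \<le> phi d p (move_mass a0 b0 k j t x)"
    unfolding y_def[symmetric] by (simp add: algebra_simps)
qed

lemma exists_close_point_with_larger_phi:
  assumes xK: "x \<in> Kset p" and z: "0 < fst x" "fst x < 1/2" and dp: "2 * p < d"
    and jk: "j \<in> {0..p}" "k \<in> {0..p}" "j \<noteq> k" and ab: "a0 < 2" "b0 < 2"
    and zj: "zc p x j a0 b0 = 0" and zk: "0 < zc p x k a0 b0" and "0 < e"
  obtains y where "y \<in> Kset p" "pdist p y x < e" "phi d p x < phi d p y"
proof -
  obtain C where gain: "\<And>t. 0 < t \<Longrightarrow> 2 * t \<le> zc p x k a0 b0 \<Longrightarrow>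
      phi d p x + t * (C - ln t) \<le> phi d p (move_mass a0 b0 k j t x)"
    using phi_move_mass_gain[OF assms(1-11)] by blast
  obtain t where t: "0 < t" "t \<le> min (zc p x k a0 b0 / 2) (e / 4)" "ln t < C"
    using exists_small_ln_less[of "min (zc p x k a0 b0 / 2) (e / 4)" C] zk \<open>0 < e\<close> by auto
  show thesis
  proof
    show "move_mass a0 b0 k j t x \<in> Kset p"
      using xK jk ab t by (intro move_mass_in_Kset) auto
    show "pdist p (move_mass a0 b0 k j t x) x < e"
      using pdist_move_mass_le[of t a0 b0 p k j x] t ab by auto
    have "0 < t * (C - ln t)" using t by simp
    then show "phi d p x < phi d p (move_mass a0 b0 k j t x)"
      using gain[of t] t by linarith
  qed
qed

theorem lemmaA4:
  fixes d p :: nat and x :: pt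
  assumes "4 \<le> d" and "1 \<le> p" and "2 * p < d"
    and "on_boundary p x"
    and "fst x \<noteq> 0" and "fst x \<noteq> 1/2"
  shows "\<not> is_local_max_on_K d p x"
proof
  assume "is_local_max_on_K d p x"
  then obtain e where "0 < e"
    and max: "\<And>y. y \<in> Kset p \<Longrightarrow> pdist p y x < e \<Longrightarrow> phi d p y \<le> phi d p x"
    unfolding is_local_max_on_K_def by blast
  have xK: "x \<in> Kset p" using assms(4) by (simp add: on_boundary_def)
  then have z: "0 < fst x" "fst x < 1/2" using assms(5,6) by (auto simp: Kset_def)
  obtain j a0 b0 where j: "j \<in> {0..p}" and ab: "a0 < 2" "b0 < 2" and zj: "zc p x j a0 b0 = 0"
    using on_boundary_zc_eq_0[OF assms(4) z] .
  obtain k where k: "k \<in> {0..p}" and zk: "0 < zc p x k a0 b0"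
    using exists_pos_zc[OF z] .
  with zj have "j \<noteq> k" by auto
  then obtain y where "y \<in> Kset p" "pdist p y x < e" "phi d p x < phi d p y"
    using exists_close_point_with_larger_phi[OF xK z assms(3) j k _ ab zj zk \<open>0 < e\<close>] by blast
  with max show False by fastforce
qed

end
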